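(* Let $k \ge 2$ be a prime number. For integers $i \ge 1$ let $m_i = k^{i-1}(k-1)$ and define $0/1$ vectors $v_i$ of length $m_i$ recursively: $v_1$ is the all-zero vector of length $k-1$, and $v_{i+1}$ is the concatenation of $k-1$ copies of the block $(v_i, 1, \dots, 1)$, where the block consists of $v_i$ followed by $k^{i-1}$ ones. Index the entries of $v_i$ by $0,1,\dots,m_i-1$, let $S$ be the support of $v_i$ (the set of indices of entries equal to $1$), and let $n_i = \frac{(k-2)k^i + 1}{k-1}$. Then there are no integers $r \ge 0$, $s > 0$ with $r + s(k-1) < n_i$ such that $\{r, r+s, r+2s, \dots, r+(k-1)s\} \cap S = \emptyset$. *)

theory Defs
  imports "HOL-Computational_Algebra.Primes"
begin

text \<open>The 0/1 vectors v_i (i >= 1) as lists of naturals; index 0 is unused.\<close>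
fun vvec :: "nat \<Rightarrow> nat \<Rightarrow> nat list" where
  "vvec k 0 = []"
| "vvec k (Suc 0) = replicate (k - 1) 0"
| "vvec k (Suc (Suc i)) = concat (replicate (k - 1) (vvec k (Suc i) @ replicate (k ^ i) 1))"

definition supp_v :: "nat \<Rightarrow> nat \<Rightarrow> nat set" where
  "supp_v k i = {j. j < length (vvec k i) \<and> vvec k i ! j = 1}"

definition n_val :: "nat \<Rightarrow> nat \<Rightarrow> nat" where
  "n_val k i = ((k - 2) * k ^ i + 1) div (k - 1)"

end

theory Submission
  imports Defs "HOL-Number_Theory.Cong"
begin

text \<open>
  By induction, \<open>v\<^sub>i\<^sub>+\<^sub>1\<close> has a 1 at position \<open>j < (k-1)k\<^sup>i\<close> exactly when the base-\<open>k\<close>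
  expansion of \<open>j\<close> contains the digit \<open>k-1\<close>. Write the common difference as
  \<open>s = k\<^sup>a s'\<close> with \<open>k \<nmid> s'\<close>. The \<open>a\<close>-th digit of \<open>r + ts\<close> is \<open>\<lfloor>r/k\<^sup>a\<rfloor> + ts' mod k\<close>,
  and since \<open>s'\<close> is invertible modulo the prime \<open>k\<close>, it equals \<open>k-1\<close> for some \<open>t < k\<close>.
  Finally \<open>n\<^sub>i \<le> m\<^sub>i\<close>, so that term of the progression lies in the support.
\<close>

lemma nth_concat_replicate:
  "j < n * length xs \<Longrightarrow> concat (replicate n xs) ! j = xs ! (j mod length xs)"
proof (induction n arbitrary: j)
  case 0
  then show ?case by simp
next
  case (Suc n)
  show ?case
  proof (cases "j < length xs")
    case True
    then show ?thesis by (simp add: nth_append)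
  next
    case False
    then have "concat (replicate n xs) ! (j - length xs) = xs ! ((j - length xs) mod length xs)"
      using Suc by simp
    moreover have "(j - length xs) mod length xs = j mod length xs"
      using False by (simp add: le_mod_geq)
    ultimately show ?thesis
      using False by (simp add: nth_append length_concat sum_list_replicate)
  qed
qed

lemma mod_power_div_power_mod:
  fixes j k :: nat
  assumes "a < b"
  shows "j mod k ^ b div k ^ a mod k = j div k ^ a mod k"
proof (cases "k = 0")
  case True
  then show ?thesis
    using assms by (simp add: power_0_left)
next
  case False
  have "k ^ b = k ^ a * k ^ (b - a)"
    using assms by (simp flip: power_add)
  then have "j mod k ^ b div k ^ a = j div k ^ a mod k ^ (b - a)"
    using False by (simp add: mod_mult2_eq)
  moreover have "k dvd k ^ (b - a)"
    using assms by simp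
  ultimately show ?thesis
    by (simp add: mod_mod_cancel)
qed

lemma high_digit_less:
  fixes j k :: nat
  assumes "j < (k - 1) * k ^ i" and "i \<le> a"
  shows "j div k ^ a mod k < k - 1"
proof -
  have "k > 0"
    using assms(1) by (cases k) auto
  then have "j div k ^ a \<le> j div k ^ i"
    using assms(2) by (simp add: div_le_mono2 power_increasing)
  also have "j div k ^ i < k - 1"
    using assms(1) by (rule less_mult_imp_div_less)
  finally show ?thesis
    using mod_less_eq_dividend le_less_trans by blast
qed

lemma length_vvec_Suc: "length (vvec k (Suc i)) = (k - 1) * k ^ i"
proof (induction i)
  case 0
  then show ?case by simp
next
  case (Suc i)
  then show ?case
    by (cases k) (simp_all add: length_concat sum_list_replicate algebra_simps)
qed

lemma vvec_Suc_nth_eq_1_iff: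
  fixes k :: nat
  assumes "k \<ge> 2" and "j < (k - 1) * k ^ i"
  shows "vvec k (Suc i) ! j = 1 \<longleftrightarrow> (\<exists>a<i. j div k ^ a mod k = k - 1)"
  using assms(2)
proof (induction i arbitrary: j)
  case 0
  then show ?case by simp
next
  case (Suc i)
  let ?w = "vvec k (Suc i)"
  let ?b = "?w @ replicate (k ^ i) 1"
  define j' where "j' = j mod k ^ Suc i"
  have len_w: "length ?w = (k - 1) * k ^ i"
    by (rule length_vvec_Suc)
  have len_b: "length ?b = k ^ Suc i"
    using assms(1) len_w by (simp add: algebra_simps)
  have j'_less: "j' < k ^ Suc i"
    using assms(1) by (simp add: j'_def)
  have nth_eq: "vvec k (Suc (Suc i)) ! j = ?b ! j'"
    using Suc.prems len_b nth_concat_replicate[of j "k - 1" ?b] by (simp add: j'_def)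
  have digits: "j' div k ^ a mod k = j div k ^ a mod k" if "a < Suc i" for a
    unfolding j'_def using that by (rule mod_power_div_power_mod)
  show ?case
  proof (cases "j' < (k - 1) * k ^ i")
    case True
    then have "vvec k (Suc (Suc i)) ! j = 1 \<longleftrightarrow> (\<exists>a<i. j' div k ^ a mod k = k - 1)"
      using nth_eq len_w Suc.IH by (simp add: nth_append)
    moreover have "j' div k ^ i mod k \<noteq> k - 1"
      using high_digit_less[OF True order_refl] by simp
    ultimately show ?thesis
      using digits by (auto simp: less_Suc_eq)
  next
    case False
    then have "vvec k (Suc (Suc i)) ! j = 1"
      using nth_eq len_w j'_less len_b by (simp add: nth_append)
    moreover have "j' div k ^ i = k - 1"
    proof (rule antisym)
      have "j' div k ^ i < k"
        using j'_less by (simp add: less_mult_imp_div_less)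
      then show "j' div k ^ i \<le> k - 1"
        by simp
      show "k - 1 \<le> j' div k ^ i"
        using False div_le_mono[of "(k - 1) * k ^ i" j' "k ^ i"] assms(1) by simp
    qed
    ultimately show ?thesis
      using digits[of i] assms(1) by auto
  qed
qed

lemma supp_v_Suc:
  fixes k :: nat
  assumes "k \<ge> 2"
  shows "supp_v k (Suc i) = {j. j < (k - 1) * k ^ i \<and> (\<exists>a. j div k ^ a mod k = k - 1)}"
proof -
  have digit_iff: "(\<exists>a<i. j div k ^ a mod k = k - 1) \<longleftrightarrow> (\<exists>a. j div k ^ a mod k = k - 1)"
    if j: "j < (k - 1) * k ^ i" for j
  proof
    assume "\<exists>a. j div k ^ a mod k = k - 1"
    then obtain a where a: "j div k ^ a mod k = k - 1"
      by blast
    have "a < i"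
      using high_digit_less[OF j, of a] a by linarith
    with a show "\<exists>a<i. j div k ^ a mod k = k - 1"
      by blast
  qed blast
  show ?thesis
    unfolding supp_v_def length_vvec_Suc
    using vvec_Suc_nth_eq_1_iff[OF assms] digit_iff by blast
qed

lemma n_val_Suc_le: "n_val k (Suc i) \<le> (k - 1) * k ^ i"
proof (cases "k \<ge> 2")
  case True
  then obtain m where m: "k = m + 2"
    by (metis add.commute le_Suc_ex)
  have "(k - 2) * k ^ Suc i + 1 \<le> (k - 1) * ((k - 1) * k ^ i)"
    by (simp add: m algebra_simps)
  then have "n_val k (Suc i) \<le> (k - 1) * ((k - 1) * k ^ i) div (k - 1)"
    unfolding n_val_def by (rule div_le_mono)
  then show ?thesis
    using True by simp
next
  case False
  then show ?thesis
    by (simp add: n_val_def)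
qed

lemma coprime_progression_hits_residue:
  fixes m s x c :: nat
  assumes "coprime s m" and "m > 0"
  shows "\<exists>t<m. (x + t * s) mod m = c mod m"
proof -
  \<comment> \<open>\<open>x + d \<equiv> c\<close>, arranged so that the truncated subtraction never cuts off\<close>
  define d where "d = m - x mod m + c"
  obtain u where "[s * u = d] (mod m)"
    using cong_solve_dvd_nat[of s m d] assms(1) by auto
  then have "(x + u mod m * s) mod m = (x + d) mod m"
    unfolding cong_def by (metis mod_add_right_eq mod_mult_left_eq mult.commute)
  also have "x + d = c + m * (x div m) + m"
    using mod_less_divisor[OF assms(2), of x] mult_div_mod_eq[of m x] unfolding d_def by linarith
  finally show ?thesis
    using assms(2) by (metis mod_add_self2 mod_mult_self2 mod_less_divisor mult.commute)
qed

lemma progression_has_digit: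
  fixes k r s :: nat
  assumes "prime k" and "s > 0"
  shows "\<exists>t<k. \<exists>a. (r + t * s) div k ^ a mod k = k - 1"
proof -
  define a where "a = multiplicity k s"
  have "\<not> is_unit k"
    using assms(1) not_prime_unit by blast
  then obtain s' where s: "s = k ^ a * s'" and "\<not> k dvd s'"
    using assms(2) multiplicity_decompose'[of s k] unfolding a_def by blast
  have "coprime s' k"
    using \<open>\<not> k dvd s'\<close> assms(1) prime_imp_coprime_nat coprime_commute by blast
  then obtain t where "t < k" and t: "(r div k ^ a + t * s') mod k = (k - 1) mod k"
    using coprime_progression_hits_residue[of s' k] prime_gt_0_nat[OF assms(1)] by blast
  have "(r + t * s) div k ^ a = (r + t * s' * k ^ a) div k ^ a"
    by (simp add: s ac_simps)
  also have "\<dots> = r div k ^ a + t * s'"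
    using prime_gt_0_nat[OF assms(1)] by simp
  finally have "(r + t * s) div k ^ a = r div k ^ a + t * s'" .
  then have "(r + t * s) div k ^ a mod k = k - 1"
    using t prime_gt_0_nat[OF assms(1)] by simp
  then show ?thesis
    using \<open>t < k\<close> by blast
qed

theorem lemma3:
  fixes k i :: nat
  assumes "prime k" and "i \<ge> 1"
  shows "\<not> (\<exists>r s. s > 0 \<and> r + s * (k - 1) < n_val k i \<and>
             {r + t * s | t. t \<le> k - 1} \<inter> supp_v k i = {})"
proof
  assume "\<exists>r s. s > 0 \<and> r + s * (k - 1) < n_val k i \<and>
             {r + t * s | t. t \<le> k - 1} \<inter> supp_v k i = {}"
  then obtain r s where "s > 0" and bound: "r + s * (k - 1) < n_val k i"
    and disjoint: "{r + t * s | t. t \<le> k - 1} \<inter> supp_v k i = {}"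
    by blast
  obtain i' where i: "i = Suc i'"
    using assms(2) by (cases i) auto
  obtain t a where "t < k" and digit: "(r + t * s) div k ^ a mod k = k - 1"
    using progression_has_digit[OF assms(1) \<open>s > 0\<close>] by blast
  have t_le: "t \<le> k - 1"
    using \<open>t < k\<close> by simp
  have "r + t * s \<le> r + s * (k - 1)"
    using mult_le_mono1[OF t_le, of s] by (simp add: mult.commute)
  also have "\<dots> < (k - 1) * k ^ i'"
    using bound n_val_Suc_le[of k i'] by (simp add: i)
  finally have "r + t * s \<in> supp_v k i"
    using digit supp_v_Suc[of k i'] prime_ge_2_nat[OF assms(1)] by (auto simp: i)
  moreover have "r + t * s \<in> {r + t * s | t. t \<le> k - 1}"
    using t_le by blast
  ultimately show False
    using disjoint by blast
qed

end
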